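(* Let $u$ and $v$ be vertices of $G$ such that $u$ is neither an ancestor nor a descendant of $v$. Suppose the set $X$ of Case 3 of the routing algorithm (the vertices of $C_{T^u}$ that are ancestors of $v$ and not ancestors of $u$) is non-empty. Then the vertices visited when executing the routing steps of Case 3 b) lie on the path in $T$ from $lca(u,v)$ to $v$, and they are visited in the order in which they appear on this path.
   Context: Let $T$ be a rooted tree on $n$ vertices with positive edge weights; $P(a,b)$ is the path in $T$ from $a$ to $b$ and $\delta_T(a,b)$ its weight; $lca(a,b)$ is the lowest common ancestor. Ancestor/descendant refer to $T$, and a vertex counts as its own ancestor and descendant; "deepest"/"highest" refer to depth in $T$. $T_v$ is the subtree of $T$ rooted at $v$. For every non-leaf vertex $v$ fix a child $c_1(v)$ with $|T_{c_1(v)}|$ maximal; edges $(v,c_1(v))$ are leftmost. A subtree $R$ of $T$ is rooted at its vertex closest to the root, $rt(R)$, and inherits the leftmost labelling; $R_v$ is the subtree of $R$ rooted at $v$. $P_R(v)$ is the longest downward path from $v$ in $R$ using only leftmost edges, with last vertex $l(v)$; $l(R):=l(rt(R))$. A vertex $v$ of $R$ is $d$-balanced if $|R_{c_1(v)}|\le |R|-d$ (with $|R_{c_1(v)}|=0$ if $c_1(v)$ is undefined or not in $R$); $b_d(v)$ is the first $d$-balanced vertex on $P_R(v)$, or NULL. $CV(R,d)=\emptyset$ if $b_d(rt(R))$ is NULL, else $\{b\}\cup\bigcup_w CV(R_w,d)$ with $b=b_d(rt(R))$ and $w$ ranging over children of $b$ in $R$. Fix an integer $k\ge4$; for a subtree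 $R$ with $m$ vertices, $C_R=V(R)$ if $k\ge m/2-1$, else $C_R=CV(R,m/k)\cup\{l(R),rt(R)\}$. Canonical subtrees: $T$ is canonical; if $R$ is canonical, each component of $R$ minus $C_R$ is canonical. Each vertex $v$ lies in $C_R$ for exactly one canonical $R$, denoted $T^v$. The spanner $G$ has vertex set $V(T)$ and edges: all edges of $T$, and all pairs of distinct vertices of $C_R$ for every canonical $R$; edge $(a,b)$ has weight $\delta_T(a,b)$. Routing algorithm from current vertex $u$ to destination $v$: Case 0: if $v$ is adjacent to $u$, move to $v$. Case 1: $u$ is an ancestor of $v$; let $X$ be the vertices of $C_{T^u}$ that are ancestors of $v$, $x$ the deepest; move to $x$, then to the child of $x$ that is an ancestor of $v$. Case 2: $u$ is a descendant of $v$; let $X$ be the vertices of $C_{T^u}$ that are descendants of $v$ and ancestors of $u$, $x$ the highest; move to $x$, then to the parent of $x$. Case 3: $u$ is neither; let $X$ be the vertices of $C_{T^u}$ that are ancestors of $v$ but not of $u$, and $Y$ those that are ancestors of $u$ but not of $v$, $y$ the highest vertex of $Y$. Case 3 a): $X=\emptyset$: move to $y$, then to the parent of $y$. Case 3 b): $X\neq\emptyset$: with $x$ the deepest vertex of $X$ and $x'$ the child of $x$ that is an ancestor of $v$, move to $x$, then to $x'$. (Moving to the current vertex means staying.) *)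

theory Defs
  imports Complex_Main
begin

text \<open>A rooted tree on the finite vertex set V with root r is given by a parent
function par (with par r = r).  Edge weights are attached to the edge (v, par v).\<close>

definition anc :: "('a \<Rightarrow> 'a) \<Rightarrow> 'a \<Rightarrow> 'a \<Rightarrow> bool" where
  "anc par a v \<longleftrightarrow> (\<exists>n. (par ^^ n) v = a)"

definition is_tree :: "'a set \<Rightarrow> 'a \<Rightarrow> ('a \<Rightarrow> 'a) \<Rightarrow> bool" where
  "is_tree V r par \<longleftrightarrow> finite V \<and> r \<in> V \<and> par r = r \<and>
     (\<forall>v\<in>V - {r}. par v \<in> V) \<and> (\<forall>v\<in>V. \<exists>n. (par ^^ n) v = r)"

definition child :: "'a set \<Rightarrow> 'a \<Rightarrow> ('a \<Rightarrow> 'a) \<Rightarrow> 'a \<Rightarrow> 'a \<Rightarrow> bool" where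
  "child V r par c x \<longleftrightarrow> c \<in> V \<and> c \<noteq> r \<and> par c = x"

definition subT :: "'a set \<Rightarrow> ('a \<Rightarrow> 'a) \<Rightarrow> 'a \<Rightarrow> 'a set" where
  "subT V par x = {s \<in> V. anc par x s}"

definition leftmost_ok :: "'a set \<Rightarrow> 'a \<Rightarrow> ('a \<Rightarrow> 'a) \<Rightarrow> ('a \<Rightarrow> 'a) \<Rightarrow> bool" where
  "leftmost_ok V r par c1 \<longleftrightarrow> (\<forall>x\<in>V. (\<exists>c. child V r par c x) \<longrightarrow>
      child V r par (c1 x) x \<and>
      (\<forall>c. child V r par c x \<longrightarrow> card (subT V par c) \<le> card (subT V par (c1 x))))"

definition is_subtree :: "'a set \<Rightarrow> ('a \<Rightarrow> 'a) \<Rightarrow> 'a set \<Rightarrow> bool" where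
  "is_subtree V par S \<longleftrightarrow> S \<subseteq> V \<and>
     (\<exists>t\<in>S. \<forall>s\<in>S. anc par t s \<and> (\<forall>w. anc par t w \<and> anc par w s \<longrightarrow> w \<in> S))"

definition rt :: "('a \<Rightarrow> 'a) \<Rightarrow> 'a set \<Rightarrow> 'a" where
  "rt par S = (THE t. t \<in> S \<and> (\<forall>s\<in>S. anc par t s))"

definition subR :: "('a \<Rightarrow> 'a) \<Rightarrow> 'a set \<Rightarrow> 'a \<Rightarrow> 'a set" where
  "subR par S x = {s \<in> S. anc par x s}"

definition has_lchild :: "'a set \<Rightarrow> 'a \<Rightarrow> ('a \<Rightarrow> 'a) \<Rightarrow> ('a \<Rightarrow> 'a) \<Rightarrow> 'a set \<Rightarrow> 'a \<Rightarrow> bool" where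
  "has_lchild V r par c1 S x \<longleftrightarrow> (\<exists>c. child V r par c x) \<and> c1 x \<in> S"

definition lpath :: "('a \<Rightarrow> 'a) \<Rightarrow> ('a \<Rightarrow> 'a) \<Rightarrow> 'a set \<Rightarrow> 'a \<Rightarrow> 'a set" where
  "lpath par c1 S x = {w \<in> S. anc par x w \<and>
      (\<forall>y. anc par x y \<and> anc par y w \<and> y \<noteq> x \<longrightarrow> y = c1 (par y))}"

definition lend :: "('a \<Rightarrow> 'a) \<Rightarrow> ('a \<Rightarrow> 'a) \<Rightarrow> 'a set \<Rightarrow> 'a \<Rightarrow> 'a" where
  "lend par c1 S x = (THE w. w \<in> lpath par c1 S x \<and> (\<forall>y\<in>lpath par c1 S x. anc par y w))"

definition lsize :: "'a set \<Rightarrow> 'a \<Rightarrow> ('a \<Rightarrow> 'a) \<Rightarrow> ('a \<Rightarrow> 'a) \<Rightarrow> 'a set \<Rightarrow> 'a \<Rightarrow> nat" where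
  "lsize V r par c1 S x = (if has_lchild V r par c1 S x then card (subR par S (c1 x)) else 0)"

definition balanced :: "'a set \<Rightarrow> 'a \<Rightarrow> ('a \<Rightarrow> 'a) \<Rightarrow> ('a \<Rightarrow> 'a) \<Rightarrow> 'a set \<Rightarrow> real \<Rightarrow> 'a \<Rightarrow> bool" where
  "balanced V r par c1 S d x \<longleftrightarrow> real (lsize V r par c1 S x) \<le> real (card S) - d"

text \<open>b_d(x): first d-balanced vertex on P_R(x), None = NULL\<close>
definition bd :: "'a set \<Rightarrow> 'a \<Rightarrow> ('a \<Rightarrow> 'a) \<Rightarrow> ('a \<Rightarrow> 'a) \<Rightarrow> 'a set \<Rightarrow> real \<Rightarrow> 'a \<Rightarrow> 'a option" where
  "bd V r par c1 S d x =
     (if \<exists>w\<in>lpath par c1 S x. balanced V r par c1 S d w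
      then Some (THE w. w \<in> lpath par c1 S x \<and> balanced V r par c1 S d w \<and>
                   (\<forall>y\<in>lpath par c1 S x. balanced V r par c1 S d y \<longrightarrow> anc par w y))
      else None)"

inductive in_cv :: "'a set \<Rightarrow> 'a \<Rightarrow> ('a \<Rightarrow> 'a) \<Rightarrow> ('a \<Rightarrow> 'a) \<Rightarrow> real \<Rightarrow> 'a set \<Rightarrow> 'a \<Rightarrow> bool"
  for V r par c1 d where
  cv_top: "bd V r par c1 S d (rt par S) = Some b \<Longrightarrow> in_cv V r par c1 d S b"
| cv_rec: "bd V r par c1 S d (rt par S) = Some b \<Longrightarrow> child V r par c b \<Longrightarrow> c \<in> S \<Longrightarrow>
           in_cv V r par c1 d (subR par S c) x \<Longrightarrow> in_cv V r par c1 d S x"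

definition CV :: "'a set \<Rightarrow> 'a \<Rightarrow> ('a \<Rightarrow> 'a) \<Rightarrow> ('a \<Rightarrow> 'a) \<Rightarrow> 'a set \<Rightarrow> real \<Rightarrow> 'a set" where
  "CV V r par c1 S d = {x. in_cv V r par c1 d S x}"

definition Cset :: "'a set \<Rightarrow> 'a \<Rightarrow> ('a \<Rightarrow> 'a) \<Rightarrow> ('a \<Rightarrow> 'a) \<Rightarrow> int \<Rightarrow> 'a set \<Rightarrow> 'a set" where
  "Cset V r par c1 k S =
     (let m = real (card S) in
      if real_of_int k \<ge> m / 2 - 1 then S
      else CV V r par c1 S (m / real_of_int k) \<union> {lend par c1 S (rt par S), rt par S})"

definition is_comp :: "'a set \<Rightarrow> ('a \<Rightarrow> 'a) \<Rightarrow> 'a set \<Rightarrow> 'a set \<Rightarrow> bool" where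
  "is_comp V par A S \<longleftrightarrow> S \<subseteq> A \<and> is_subtree V par S \<and>
     (\<forall>S'. S \<subseteq> S' \<and> S' \<subseteq> A \<and> is_subtree V par S' \<longrightarrow> S' = S)"

inductive canonical :: "'a set \<Rightarrow> 'a \<Rightarrow> ('a \<Rightarrow> 'a) \<Rightarrow> ('a \<Rightarrow> 'a) \<Rightarrow> int \<Rightarrow> 'a set \<Rightarrow> bool"
  for V r par c1 k where
  can_T: "canonical V r par c1 k V"
| can_comp: "canonical V r par c1 k R \<Longrightarrow> is_comp V par (R - Cset V r par c1 k R) Q \<Longrightarrow>
             canonical V r par c1 k Q"

definition Tsup :: "'a set \<Rightarrow> 'a \<Rightarrow> ('a \<Rightarrow> 'a) \<Rightarrow> ('a \<Rightarrow> 'a) \<Rightarrow> int \<Rightarrow> 'a \<Rightarrow> 'a set" where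
  "Tsup V r par c1 k u = (THE R. canonical V r par c1 k R \<and> u \<in> Cset V r par c1 k R)"

definition lca :: "('a \<Rightarrow> 'a) \<Rightarrow> 'a \<Rightarrow> 'a \<Rightarrow> 'a" where
  "lca par u v = (THE a. anc par a u \<and> anc par a v \<and> (\<forall>b. anc par b u \<and> anc par b v \<longrightarrow> anc par b a))"

text \<open>vertex set of the tree path P(a,b) when a is an ancestor of b\<close>
definition tpath :: "('a \<Rightarrow> 'a) \<Rightarrow> 'a \<Rightarrow> 'a \<Rightarrow> 'a set" where
  "tpath par a b = {w. anc par a w \<and> anc par w b}"

end

theory Submission
  imports Defs
begin

text \<open>Nothing about the canonical subtrees or the sets \<open>C\<^sub>R\<close> is needed: the claim holds for
any non-empty set \<open>X\<close> of ancestors of \<open>v\<close> that are not ancestors of \<open>u\<close>.  Ancestors of \<open>v\<close> form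
a chain, so \<open>X\<close> has a deepest element \<open>x\<close>.  As \<open>lca(u,v)\<close> and \<open>x\<close> are both ancestors
of \<open>v\<close>, they are comparable, and \<open>x\<close> cannot lie above \<open>lca(u,v)\<close> since it is no ancestor
of \<open>u\<close>; hence \<open>x\<close> lies on \<open>P(lca(u,v), v)\<close>.  If \<open>x \<noteq> v\<close>, the next vertex \<open>x'\<close> of that path
is the unique child of \<open>x\<close> that is an ancestor of \<open>v\<close>.\<close>

lemma anc_refl [simp]: "anc par a a"
  unfolding anc_def by (rule exI[of _ 0]) simp

lemma anc_trans: "anc par a b \<Longrightarrow> anc par b c \<Longrightarrow> anc par a c"
  unfolding anc_def by (metis funpow_add comp_apply)

lemma anc_parent [simp]: "anc par (par a) a"
  unfolding anc_def by (rule exI[of _ 1]) simp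

lemma funpow_diff_apply:
  assumes "m \<le> n"
  shows "(f ^^ n) x = (f ^^ (n - m)) ((f ^^ m) x)"
proof -
  have "f ^^ n = f ^^ ((n - m) + m)" using assms by simp
  then show ?thesis by (simp add: funpow_add)
qed

lemma anc_linear:
  assumes "anc par a v" "anc par b v"
  shows "anc par a b \<or> anc par b a"
proof -
  obtain m n where m: "(par ^^ m) v = a" and n: "(par ^^ n) v = b"
    using assms unfolding anc_def by blast
  show ?thesis
  proof (cases "m \<le> n")
    case True
    from funpow_diff_apply[OF this, of par v] have "(par ^^ (n - m)) a = b" by (simp only: m n)
    then show ?thesis unfolding anc_def by blast
  next
    case False
    then have "n \<le> m" by simp
    from funpow_diff_apply[OF this, of par v] have "(par ^^ (m - n)) b = a" by (simp only: m n)
    then show ?thesis unfolding anc_def by blast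
  qed
qed

lemma anc_strict_imp_anc_parent:
  assumes "anc par a b" "a \<noteq> b"
  shows "anc par a (par b)"
proof -
  obtain n where n: "(par ^^ n) b = a" using assms(1) unfolding anc_def by blast
  with assms(2) obtain m where "n = Suc m" by (cases n) auto
  with n have "(par ^^ m) (par b) = a" by (simp add: funpow_swap1)
  then show ?thesis unfolding anc_def by blast
qed

lemma anc_strict_imp_child_anc:
  assumes "anc par x v" "x \<noteq> v"
  shows "\<exists>c. par c = x \<and> c \<noteq> x \<and> anc par c v"
proof -
  obtain n where "(par ^^ n) v = x" using assms(1) unfolding anc_def by blast
  with assms(2) show ?thesis
  proof (induction n arbitrary: v)
    case 0
    then show ?case by simp
  next
    case (Suc n)
    have pv: "(par ^^ n) (par v) = x" using Suc.prems(2) by (simp add: funpow_swap1)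
    show ?case
    proof (cases "par v = x")
      case True
      with Suc.prems(1) show ?thesis by (intro exI[of _ v]) auto
    next
      case False
      then have "x \<noteq> par v" by simp
      then obtain c where "par c = x" "c \<noteq> x" and cpv: "anc par c (par v)"
        using Suc.IH[OF _ pv] by blast
      moreover have "anc par c v" using anc_trans[OF cpv anc_parent] .
      ultimately show ?thesis by blast
    qed
  qed
qed

lemma tree_parent_in_V: "is_tree V r par \<Longrightarrow> v \<in> V \<Longrightarrow> par v \<in> V"
  unfolding is_tree_def by (cases "v = r") auto

lemma tree_funpow_in_V: "is_tree V r par \<Longrightarrow> v \<in> V \<Longrightarrow> (par ^^ n) v \<in> V"
  by (induction n) (simp_all add: tree_parent_in_V)

lemma tree_anc_in_V:
  assumes "is_tree V r par" "v \<in> V" "anc par a v"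
  shows "a \<in> V"
proof -
  obtain n where "(par ^^ n) v = a" using assms(3) unfolding anc_def by blast
  then show ?thesis using tree_funpow_in_V[OF assms(1,2), of n] by simp
qed

lemma tree_root_anc: "is_tree V r par \<Longrightarrow> v \<in> V \<Longrightarrow> anc par r v"
  unfolding is_tree_def anc_def by blast

lemma tree_funpow_root: "is_tree V r par \<Longrightarrow> (par ^^ n) r = r"
  unfolding is_tree_def by (induction n) auto

lemma tree_periodic_eq_root:
  assumes t: "is_tree V r par" and "v \<in> V" and cyc: "(par ^^ p) v = v" and "0 < p"
  shows "v = r"
proof -
  obtain N where N: "(par ^^ N) v = r" using t \<open>v \<in> V\<close> unfolding is_tree_def by blast
  have "v = (par ^^ (p * N)) v" using funpow_mod_eq[OF cyc, of "p * N"] by simp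
  also have "\<dots> = (par ^^ (p * N - N)) r"
  proof -
    have "N \<le> p * N" using \<open>0 < p\<close> by simp
    from funpow_diff_apply[OF this, of par v] show ?thesis by (simp only: N)
  qed
  also have "\<dots> = r" using tree_funpow_root[OF t] .
  finally show ?thesis .
qed

lemma tree_fixpoint_eq_root: "is_tree V r par \<Longrightarrow> v \<in> V \<Longrightarrow> par v = v \<Longrightarrow> v = r"
  using tree_periodic_eq_root[of V r par v 1] by simp

lemma tree_anc_antisym:
  assumes t: "is_tree V r par" and "b \<in> V" and "anc par a b" and "anc par b a"
  shows "a = b"
proof -
  obtain m n where m: "(par ^^ m) b = a" and n: "(par ^^ n) a = b"
    using assms unfolding anc_def by blast
  then have cyc: "(par ^^ (n + m)) b = b" by (simp add: funpow_add)
  show ?thesis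
  proof (cases "n + m = 0")
    case True
    with m show ?thesis by simp
  next
    case False
    then have "b = r" using tree_periodic_eq_root[OF t \<open>b \<in> V\<close> cyc] by simp
    then show ?thesis using m tree_funpow_root[OF t] by simp
  qed
qed

lemma tree_deepest_anc_ex1:
  assumes t: "is_tree V r par" and "v \<in> V"
    and S: "S \<subseteq> {a. anc par a v}" and "S \<noteq> {}"
  shows "\<exists>!y. y \<in> S \<and> (\<forall>z\<in>S. anc par z y)"
proof -
  from \<open>S \<noteq> {}\<close> S obtain n where "(par ^^ n) v \<in> S" unfolding anc_def by blast
  define n0 where "n0 = (LEAST n. (par ^^ n) v \<in> S)"
  have y: "(par ^^ n0) v \<in> S" unfolding n0_def by (rule LeastI) fact
  have deepest: "anc par z ((par ^^ n0) v)" if "z \<in> S" for z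
  proof -
    obtain m where m: "(par ^^ m) v = z" using S \<open>z \<in> S\<close> unfolding anc_def by blast
    have "n0 \<le> m" unfolding n0_def using \<open>z \<in> S\<close> m by (metis Least_le)
    from funpow_diff_apply[OF this, of par v] have "(par ^^ (m - n0)) ((par ^^ n0) v) = z"
      by (simp only: m)
    then show ?thesis unfolding anc_def by blast
  qed
  show ?thesis
  proof (rule ex1I[of _ "(par ^^ n0) v"])
    fix y assume y': "y \<in> S \<and> (\<forall>z\<in>S. anc par z y)"
    then have "anc par y v" using S by blast
    then have "y \<in> V" by (rule tree_anc_in_V[OF t \<open>v \<in> V\<close>])
    have "anc par ((par ^^ n0) v) y" using y' y by blast
    moreover have "anc par y ((par ^^ n0) v)" using y' deepest by blast
    ultimately show "y = (par ^^ n0) v" by (rule tree_anc_antisym[OF t \<open>y \<in> V\<close>, symmetric])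
  qed (use y deepest in blast)
qed

lemma tree_lca_anc:
  assumes t: "is_tree V r par" and "u \<in> V" "v \<in> V"
  shows "anc par (lca par u v) u \<and> anc par (lca par u v) v"
proof -
  define L where "L = {a. anc par a u \<and> anc par a v}"
  have lca_eq: "lca par u v = (THE a. a \<in> L \<and> (\<forall>b\<in>L. anc par b a))"
    unfolding lca_def L_def by simp
  have "L \<subseteq> {a. anc par a v}" "r \<in> L"
    unfolding L_def using tree_root_anc[OF t] assms by auto
  then have "\<exists>!a. a \<in> L \<and> (\<forall>b\<in>L. anc par b a)"
    using tree_deepest_anc_ex1[OF t \<open>v \<in> V\<close>, of L] by blast
  then have "lca par u v \<in> L" unfolding lca_eq by (rule theI'[THEN conjunct1])
  then show ?thesis unfolding L_def by blast
qed

lemma tree_lca_anc_if_not_anc: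
  assumes t: "is_tree V r par" and "u \<in> V" "v \<in> V"
    and xv: "anc par x v" and xu: "\<not> anc par x u"
  shows "anc par (lca par u v) x"
proof -
  have lu: "anc par (lca par u v) u" and lv: "anc par (lca par u v) v"
    using tree_lca_anc[OF t \<open>u \<in> V\<close> \<open>v \<in> V\<close>] by auto
  have "\<not> anc par x (lca par u v)" using anc_trans[OF _ lu] xu by blast
  then show ?thesis using anc_linear[OF lv xv] by blast
qed

lemma tree_siblings_anc_eq:
  assumes t: "is_tree V r par" and c: "child V r par c x" and c': "child V r par c' x"
    and "anc par c c'"
  shows "c = c'"
proof (rule ccontr)
  assume "c \<noteq> c'"
  then have "anc par c x"
    using anc_strict_imp_anc_parent[OF \<open>anc par c c'\<close>] c' unfolding child_def by simp
  moreover have "anc par x c" using c anc_parent[of par c] unfolding child_def by simp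
  moreover have "c \<in> V" "c \<noteq> r" using c unfolding child_def by auto
  ultimately have "c = x" using tree_anc_antisym[OF t \<open>c \<in> V\<close>] by blast
  then have "par c = c" using c unfolding child_def by simp
  then show False using tree_fixpoint_eq_root[OF t \<open>c \<in> V\<close>] \<open>c \<noteq> r\<close> by simp
qed

lemma tree_child_towards_ex1:
  assumes t: "is_tree V r par" and "v \<in> V" and "anc par x v" "x \<noteq> v"
  shows "\<exists>!c. child V r par c x \<and> anc par c v"
proof -
  obtain c where pc: "par c = x" and "c \<noteq> x" and cv: "anc par c v"
    using anc_strict_imp_child_anc[OF assms(3,4)] by blast
  have "c \<noteq> r" using t pc \<open>c \<noteq> x\<close> unfolding is_tree_def by auto
  moreover have "c \<in> V" using tree_anc_in_V[OF t \<open>v \<in> V\<close> cv] .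
  ultimately have "child V r par c x" using pc unfolding child_def by simp
  show ?thesis
  proof (rule ex1I)
    fix c' assume c': "child V r par c' x \<and> anc par c' v"
    from anc_linear[OF cv] c' consider "anc par c c'" | "anc par c' c" by blast
    then show "c' = c"
      using tree_siblings_anc_eq[OF t] \<open>child V r par c x\<close> c' by cases metis+
  qed (use \<open>child V r par c x\<close> cv in blast)
qed

theorem lemma11:
  fixes V :: "'a set" and r :: 'a and par c1 :: "'a \<Rightarrow> 'a" and wt :: "'a \<Rightarrow> real"
    and k :: int and u v :: 'a
  assumes tree: "is_tree V r par"
    and weights: "\<forall>y\<in>V - {r}. wt y > 0"
    and lm: "leftmost_ok V r par c1"
    and k4: "k \<ge> 4"
    and uV: "u \<in> V" and vV: "v \<in> V"
    and nanc1: "\<not> anc par u v" and nanc2: "\<not> anc par v u"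
  defines "X \<equiv> {y \<in> Cset V r par c1 k (Tsup V r par c1 k u). anc par y v \<and> \<not> anc par y u}"
  assumes Xne: "X \<noteq> {}"
  defines "x \<equiv> THE y. y \<in> X \<and> (\<forall>z\<in>X. anc par z y)"
    and "x' \<equiv> THE c. child V r par c (THE y. y \<in> X \<and> (\<forall>z\<in>X. anc par z y)) \<and> anc par c v"
  shows "x \<in> tpath par (lca par u v) v \<and>
         (x \<noteq> v \<longrightarrow> x' \<in> tpath par (lca par u v) v \<and> anc par x x' \<and> x \<noteq> x')"
proof -
  have "X \<subseteq> {a. anc par a v}" unfolding X_def by blast
  then have "\<exists>!y. y \<in> X \<and> (\<forall>z\<in>X. anc par z y)"
    by (rule tree_deepest_anc_ex1[OF tree vV _ Xne])
  then have "x \<in> X" unfolding x_def by (rule theI'[THEN conjunct1])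
  then have xv: "anc par x v" and xu: "\<not> anc par x u" unfolding X_def by auto
  have lca_x: "anc par (lca par u v) x" using tree_lca_anc_if_not_anc[OF tree uV vV xv xu] .
  have "x' \<in> tpath par (lca par u v) v \<and> anc par x x' \<and> x \<noteq> x'" if "x \<noteq> v"
  proof -
    have "child V r par x' x \<and> anc par x' v"
      unfolding x'_def x_def[symmetric]
      using tree_child_towards_ex1[OF tree vV xv that] by (rule theI')
    then have x'v: "anc par x' v" and "par x' = x" "x' \<in> V" "x' \<noteq> r"
      unfolding child_def by auto
    have xx': "anc par x x'" using anc_parent[of par x'] \<open>par x' = x\<close> by simp
    have "x \<noteq> x'"
      using tree_fixpoint_eq_root[OF tree \<open>x' \<in> V\<close>] \<open>par x' = x\<close> \<open>x' \<noteq> r\<close> by auto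
    with xx' x'v anc_trans[OF lca_x xx'] show ?thesis unfolding tpath_def by blast
  qed
  with lca_x xv show ?thesis unfolding tpath_def by blast
qed

end
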